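(* Let $X^{2n}$ be a quasitoric manifold, $T^{n-1}\subset T^n$ a subtorus, $1\leqslant j\leqslant n-1$, and $x$ a fixed point of the $T^n$-action. Then the tangent weights of the restricted $T^{n-1}$-action at $x$ fail to be in $j$-general position (i.e. some $j$ of the $n$ weights $\alpha_{x,1},\ldots,\alpha_{x,n}\in\mathrm{Hom}(T^{n-1},T^1)$ are linearly dependent) if and only if some $n-j$ of the characteristic values at $x$ lie in $\Pi$.
   Context: A quasitoric manifold $X^{2n}$ carries a locally standard $T^n$-action with orbit space a simple $n$-polytope $P^n$; for each facet $F$ of $P^n$, $\lambda(F)\in N=\mathrm{Hom}(T^1,T^n)\cong\mathbb{Z}^n$ is the primitive vector of the circle subgroup stabilizing points over the interior of $F$. Fixed points correspond to vertices; the characteristic values at $x$ are the $n$ vectors $\lambda(F)$ for the facets containing the corresponding vertex. For a subtorus $T^{n-1}\subset T^n$, $\Pi\subset N$ is the image of $\mathrm{Hom}(T^1,T^{n-1})$, i.e. the kernel of $N\to\mathrm{Hom}(T^1,T^n/T^{n-1})\cong\mathbb{Z}$. The tangent weights of the $T^{n-1}$-action at $x$ are the restrictions to $T^{n-1}$ of the $n$ weights of the tangent $T^n$-representation at $x$; linear independence is over $\mathbb{Q}$. *)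

theory Defs
  imports "HOL-Analysis.Analysis"
begin

text \<open>Lattices N = Hom(T^1,T^n) and M = Hom(T^n,T^1) are both modelled as int^'n,
  with CARD('n) = n, and the natural pairing M x N -> Z is the coordinate pairing.\<close>

definition lpair :: "int^'n \<Rightarrow> int^'n \<Rightarrow> int" where
  "lpair a v = (\<Sum>i\<in>UNIV. a $ i * v $ i)"

text \<open>The sublattice Pi of N corresponding to the subtorus T^{n-1}: kernel of the
  (surjective) homomorphism N -> Hom(T^1, T^n/T^{n-1}) = Z given by u.\<close>
definition Pi_lat :: "int^'n \<Rightarrow> (int^'n) set" where
  "Pi_lat u = {v. lpair u v = 0}"

text \<open>A family of weights (indexed by S), restricted to the sublattice P, is linearly
  dependent over Q: a nontrivial rational combination vanishes on all of P.\<close>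
definition restr_dependent :: "(int^'n) set \<Rightarrow> ('n \<Rightarrow> int^'n) \<Rightarrow> 'n set \<Rightarrow> bool" where
  "restr_dependent P alpha S \<longleftrightarrow>
     (\<exists>c :: 'n \<Rightarrow> rat. (\<exists>i\<in>S. c i \<noteq> 0) \<and>
        (\<forall>v\<in>P. (\<Sum>i\<in>S. c i * of_int (lpair (alpha i) v)) = 0))"

definition j_general_position :: "nat \<Rightarrow> (int^'n) set \<Rightarrow> ('n \<Rightarrow> int^'n) \<Rightarrow> bool" where
  "j_general_position j P alpha \<longleftrightarrow> (\<forall>S. card S = j \<longrightarrow> \<not> restr_dependent P alpha S)"

end

theory Submission imports Defs begin

text \<open>Write \<open>\<langle>a, v\<rangle>\<close> for the pairing. Since \<open>\<langle>\<alpha>\<^sub>i, \<lambda>\<^sub>k\<rangle> = \<plusminus>\<delta>\<^sub>i\<^sub>k\<close>, the weights form the dual basis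
  of the characteristic values, so every \<open>a\<close> expands as \<open>a = \<Sum>\<^sub>k \<epsilon>\<^sub>k \<langle>a, \<lambda>\<^sub>k\<rangle> \<alpha>\<^sub>k\<close>.
  If some \<open>\<lambda>\<^sub>k\<close> with \<open>k \<notin> S\<close> is not in \<open>\<Pi> = u\<^sup>\<bottom>\<close>, then for each \<open>m \<in> S\<close> the vector
  \<open>\<langle>u, \<lambda>\<^sub>m\<rangle> \<lambda>\<^sub>k - \<langle>u, \<lambda>\<^sub>k\<rangle> \<lambda>\<^sub>m\<close> lies in \<open>\<Pi>\<close> and detects the coefficient of \<open>\<alpha>\<^sub>m\<close> alone,
  so the weights indexed by \<open>S\<close> stay independent on \<open>\<Pi>\<close>. Conversely, if all \<open>\<lambda>\<^sub>k\<close> with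
  \<open>k \<notin> S\<close> lie in \<open>\<Pi>\<close>, the expansion of \<open>u\<close> involves only the \<open>\<alpha>\<^sub>i\<close> with \<open>i \<in> S\<close>; it is
  nontrivial because \<open>u \<noteq> 0\<close> and vanishes on \<open>\<Pi>\<close> by definition.\<close>

lemma lpair_lincomb_right:
  "lpair a (x *s p + y *s q) = x * lpair a p + y * lpair a q"
  by (simp add: lpair_def sum_distrib_left sum.distrib algebra_simps)

lemma dual_family_resolution_of_identity:
  fixes lam alpha :: "'n::finite \<Rightarrow> int^'n" and eps :: "'n \<Rightarrow> int"
  assumes dual: "\<And>i k. lpair (alpha i) (lam k) = (if i = k then eps i else 0)"
    and sign: "\<And>i. eps i = 1 \<or> eps i = -1"
  shows "(\<Sum>k\<in>UNIV. lam k $ m * (eps k * alpha k $ m')) = (if m = m' then 1 else 0)"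
proof -
  define B :: "rat^'n^'n" where "B = (\<chi> k m. of_int (eps k * alpha k $ m))"
  define L :: "rat^'n^'n" where "L = (\<chi> m k. of_int (lam k $ m))"
  have eps_square: "eps k * eps k = 1" for k using sign[of k] by auto
  have "(B ** L) $ k $ k' = (if k = k' then 1 else 0)" for k k'
  proof -
    have "(B ** L) $ k $ k' = of_int (eps k * lpair (alpha k) (lam k'))"
      by (simp add: matrix_matrix_mult_def B_def L_def lpair_def sum_distrib_left mult.assoc)
    then show ?thesis using dual eps_square by (simp flip: of_int_mult)
  qed
  then have "B ** L = mat 1" by (simp add: vec_eq_iff mat_def)
  then have "L ** B = mat 1" using matrix_left_right_inverse by blast
  then have "(L ** B) $ m $ m' = (if m = m' then 1 else 0)" by (simp add: mat_def)
  then have "of_int (\<Sum>k\<in>UNIV. lam k $ m * (eps k * alpha k $ m')) = (of_int (if m = m' then 1 else 0) :: rat)"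
    by (simp add: matrix_matrix_mult_def B_def L_def)
  then show ?thesis by (simp only: of_int_eq_iff)
qed

lemma lpair_dual_expansion:
  fixes lam alpha :: "'n::finite \<Rightarrow> int^'n" and eps :: "'n \<Rightarrow> int"
  assumes dual: "\<And>i k. lpair (alpha i) (lam k) = (if i = k then eps i else 0)"
    and sign: "\<And>i. eps i = 1 \<or> eps i = -1"
  shows "lpair a v = (\<Sum>k\<in>UNIV. eps k * lpair a (lam k) * lpair (alpha k) v)"
proof -
  have "(\<Sum>k\<in>UNIV. eps k * lpair a (lam k) * lpair (alpha k) v)
      = (\<Sum>k\<in>UNIV. \<Sum>m\<in>UNIV. \<Sum>m'\<in>UNIV. a $ m * v $ m' * (lam k $ m * (eps k * alpha k $ m')))"
    by (simp add: lpair_def sum_distrib_left sum_distrib_right algebra_simps)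
  also have "\<dots> = (\<Sum>m\<in>UNIV. \<Sum>k\<in>UNIV. \<Sum>m'\<in>UNIV. a $ m * v $ m' * (lam k $ m * (eps k * alpha k $ m')))"
    by (rule sum.swap)
  also have "\<dots> = (\<Sum>m\<in>UNIV. \<Sum>m'\<in>UNIV. a $ m * v $ m' * (\<Sum>k\<in>UNIV. lam k $ m * (eps k * alpha k $ m')))"
    by (rule sum.cong[OF refl], subst sum.swap) (simp add: sum_distrib_left)
  also have "\<dots> = lpair a v"
    by (simp add: dual_family_resolution_of_identity[OF dual sign] lpair_def if_distrib sum.delta cong: if_cong)
  finally show ?thesis by simp
qed

lemma restr_dependent_imp_lam_in_Pi_lat:
  fixes lam alpha :: "'n::finite \<Rightarrow> int^'n" and eps :: "'n \<Rightarrow> int"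
  assumes dual: "\<And>i k. lpair (alpha i) (lam k) = (if i = k then eps i else 0)"
    and eps_nonzero: "\<And>i. eps i \<noteq> 0"
    and dep: "restr_dependent (Pi_lat u) alpha S"
    and "k \<notin> S"
  shows "lam k \<in> Pi_lat u"
proof (rule ccontr)
  assume lam_k: "lam k \<notin> Pi_lat u"
  obtain c :: "'n \<Rightarrow> rat" and m where "m \<in> S" "c m \<noteq> 0"
    and vanish: "\<And>v. v \<in> Pi_lat u \<Longrightarrow> (\<Sum>i\<in>S. c i * of_int (lpair (alpha i) v)) = 0"
    using dep unfolding restr_dependent_def by blast
  define v where "v = lpair u (lam m) *s lam k + (- lpair u (lam k)) *s lam m"
  have "v \<in> Pi_lat u" by (simp add: Pi_lat_def v_def lpair_lincomb_right)
  have "(\<Sum>i\<in>S. c i * of_int (lpair (alpha i) v))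
      = (\<Sum>i\<in>S. if i = m then c m * of_int (- lpair u (lam k) * eps m) else 0)"
    using \<open>k \<notin> S\<close> by (intro sum.cong) (auto simp: v_def lpair_lincomb_right dual)
  also have "\<dots> \<noteq> 0"
    using \<open>m \<in> S\<close> \<open>c m \<noteq> 0\<close> lam_k eps_nonzero[of m] by (simp add: Pi_lat_def)
  finally show False using vanish[OF \<open>v \<in> Pi_lat u\<close>] by simp
qed

lemma lam_in_Pi_lat_imp_restr_dependent:
  fixes lam alpha :: "'n::finite \<Rightarrow> int^'n" and eps :: "'n \<Rightarrow> int"
  assumes dual: "\<And>i k. lpair (alpha i) (lam k) = (if i = k then eps i else 0)"
    and sign: "\<And>i. eps i = 1 \<or> eps i = -1"
    and u_nonzero: "\<exists>v. lpair u v \<noteq> 0"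
    and outside_S: "\<And>i. i \<notin> S \<Longrightarrow> lam i \<in> Pi_lat u"
  shows "restr_dependent (Pi_lat u) alpha S"
proof -
  define c :: "'n \<Rightarrow> rat" where "c i = of_int (eps i * lpair u (lam i))" for i
  have expansion: "(\<Sum>i\<in>S. c i * of_int (lpair (alpha i) v)) = of_int (lpair u v)" for v
  proof -
    have "(\<Sum>i\<in>S. c i * of_int (lpair (alpha i) v)) = (\<Sum>i\<in>UNIV. c i * of_int (lpair (alpha i) v))"
      using outside_S by (intro sum.mono_neutral_left) (auto simp: c_def Pi_lat_def)
    also have "\<dots> = of_int (lpair u v)"
      by (simp add: c_def lpair_dual_expansion[OF dual sign, of u v])
    finally show ?thesis .
  qed
  have "\<exists>i\<in>S. c i \<noteq> 0"
    using u_nonzero expansion by (metis (no_types, lifting) of_int_0_eq_iff sum.neutral mult_zero_left)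
  with expansion show ?thesis by (auto simp: restr_dependent_def Pi_lat_def)
qed

theorem lemma4p5:
  fixes lam :: "'n::finite \<Rightarrow> int^'n"   \<comment> \<open>characteristic values at the fixed point x\<close>
    and alpha :: "'n \<Rightarrow> int^'n"          \<comment> \<open>tangent weights of the T^n-action at x\<close>
    and eps :: "'n \<Rightarrow> int"
    and u :: "int^'n"                   \<comment> \<open>N -> Hom(T^1, T^n/T^{n-1}) = Z\<close>
    and j :: nat
  assumes dual: "\<And>i k. lpair (alpha i) (lam k) = (if i = k then eps i else 0)"
    and sign: "\<And>i. eps i = 1 \<or> eps i = -1"
    and surj: "\<exists>v. lpair u v = 1"
    and j1: "1 \<le> j" and j2: "j \<le> CARD('n) - 1"
  shows "\<not> j_general_position j (Pi_lat u) alpha \<longleftrightarrow>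
         (\<exists>S. card S = CARD('n) - j \<and> (\<forall>i\<in>S. lam i \<in> Pi_lat u))"
proof
  assume "\<not> j_general_position j (Pi_lat u) alpha"
  then obtain S where "card S = j" and dep: "restr_dependent (Pi_lat u) alpha S"
    unfolding j_general_position_def by blast
  have "eps i \<noteq> 0" for i using sign[of i] by auto
  with dep have "\<forall>i\<in>-S. lam i \<in> Pi_lat u"
    using restr_dependent_imp_lam_in_Pi_lat[OF dual] by blast
  moreover have "card (-S) = CARD('n) - j"
    using \<open>card S = j\<close> card_Diff_subset[of S UNIV] by (simp add: Compl_eq_Diff_UNIV)
  ultimately show "\<exists>S. card S = CARD('n) - j \<and> (\<forall>i\<in>S. lam i \<in> Pi_lat u)" by blast
next
  assume "\<exists>S. card S = CARD('n) - j \<and> (\<forall>i\<in>S. lam i \<in> Pi_lat u)"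
  then obtain S where "card S = CARD('n) - j" and in_Pi: "\<forall>i\<in>S. lam i \<in> Pi_lat u" by blast
  then have "card (-S) = j"
    using j2 card_Diff_subset[of S UNIV] by (simp add: Compl_eq_Diff_UNIV)
  moreover have "\<exists>v. lpair u v \<noteq> 0" using surj by (metis one_neq_zero)
  then have "restr_dependent (Pi_lat u) alpha (-S)"
    using in_Pi by (intro lam_in_Pi_lat_imp_restr_dependent[OF dual sign]) auto
  ultimately show "\<not> j_general_position j (Pi_lat u) alpha"
    unfolding j_general_position_def by blast
qed

end
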